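(* Let $R$ be the ring of upper triangular $2\times 2$ matrices over the field $\mathbb{F}_3$ (a non-commutative ring with unity of order $27$ having exactly $15$ zero-divisors, counting $0$). Consider the (left) projective line $P(R)$. Then: (i) $P(R)$ has exactly $48$ points; (ii) exactly $42$ of these points have a representative pair $(a,b)$ in which $a$ or $b$ is a unit of $R$; (iii) every point of $P(R)$ has exactly $20$ neighbours other than itself; (iv) any two distant points of $P(R)$ have exactly $6$ common neighbours; (v) any three pairwise distant points of $P(R)$ have no common neighbour; (vi) the maximum cardinality of a set of pairwise distant points of $P(R)$ is $4$. *)

theory Defs
  imports Main "HOL-Library.Numeral_Type"
begin

definition ring_unit :: "'a::ring_1 \<Rightarrow> bool" where
  "ring_unit u \<longleftrightarrow> (\<exists>v. u * v = 1 \<and> v * u = 1)"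

definition invertible2 :: "'a::ring_1 \<Rightarrow> 'a \<Rightarrow> 'a \<Rightarrow> 'a \<Rightarrow> bool" where
  "invertible2 a b c d \<longleftrightarrow> (\<exists>e f g h.
     a*e + b*g = 1 \<and> a*f + b*h = 0 \<and> c*e + d*g = 0 \<and> c*f + d*h = 1 \<and>
     e*a + f*c = 1 \<and> e*b + f*d = 0 \<and> g*a + h*c = 0 \<and> g*b + h*d = 1)"

definition admissible :: "'a::ring_1 \<Rightarrow> 'a \<Rightarrow> bool" where
  "admissible a b \<longleftrightarrow> (\<exists>c d. invertible2 a b c d)"

definition lsub :: "'a::ring_1 \<Rightarrow> 'a \<Rightarrow> ('a \<times> 'a) set" where
  "lsub a b = {(r * a, r * b) | r. True}"

definition projline :: "('a::ring_1 \<times> 'a) set set" where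
  "projline = {lsub a b | a b. admissible a b}"

definition distant :: "('a::ring_1 \<times> 'a) set \<Rightarrow> ('a \<times> 'a) set \<Rightarrow> bool" where
  "distant p q \<longleftrightarrow> (\<exists>a b c d. p = lsub a b \<and> q = lsub c d \<and> invertible2 a b c d)"

definition neighbour :: "('a::ring_1 \<times> 'a) set \<Rightarrow> ('a \<times> 'a) set \<Rightarrow> bool" where
  "neighbour p q \<longleftrightarrow> \<not> distant p q"

text \<open>UT x y z stands for the matrix with rows (x,y) and (0,z); the type 3 is Z/3Z = F_3.\<close>
datatype ut = UT "3" "3" "3"

instantiation ut :: ring_1
begin
definition "0 = UT 0 0 0"
definition "1 = UT 1 0 1"
fun plus_ut :: "ut \<Rightarrow> ut \<Rightarrow> ut" where
  "plus_ut (UT a b c) (UT d e f) = UT (a+d) (b+e) (c+f)"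
fun minus_ut :: "ut \<Rightarrow> ut \<Rightarrow> ut" where
  "minus_ut (UT a b c) (UT d e f) = UT (a-d) (b-e) (c-f)"
fun uminus_ut :: "ut \<Rightarrow> ut" where
  "uminus_ut (UT a b c) = UT (-a) (-b) (-c)"
fun times_ut :: "ut \<Rightarrow> ut \<Rightarrow> ut" where
  "times_ut (UT a b c) (UT d e f) = UT (a*d) (a*e + b*f) (c*f)"
instance
proof
  fix x y z :: ut
  show "x * y * z = x * (y * z)" by (cases x; cases y; cases z) (simp add: algebra_simps)
  show "x + y + z = x + (y + z)" by (cases x; cases y; cases z) (simp add: algebra_simps)
  show "x + y = y + x" by (cases x; cases y) (simp add: algebra_simps)
  show "0 + x = x" by (cases x) (simp add: zero_ut_def)
  show "- x + x = 0" by (cases x) (simp add: zero_ut_def)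
  show "x - y = x + - y" by (cases x; cases y) simp
  show "(x + y) * z = x * z + y * z" by (cases x; cases y; cases z) (simp add: algebra_simps)
  show "x * (y + z) = x * y + x * z" by (cases x; cases y; cases z) (simp add: algebra_simps)
  show "1 * x = x" by (cases x) (simp add: one_ut_def)
  show "x * 1 = x" by (cases x) (simp add: one_ut_def)
  show "(0::ut) \<noteq> 1" by (simp add: zero_ut_def one_ut_def)
qed
end



abbreviation PR :: "(ut \<times> ut) set set" where "PR \<equiv> projline"

end

theory Submission
  imports Defs
begin

(* The diagonal entries give a surjective ring homomorphism from R onto F3 x F3 whose kernel,
   the strictly upper triangular matrices, is an ideal of square zero. Hence a pair (a, b) is
   admissible iff both of its diagonal reductions are nonzero vectors of F3^2, and a 2x2 matrix
   over R is invertible iff both of its diagonal reductions are. A point of P(R) is therefore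
   determined by its two images in P^1(F3) together with one invariant in F3 built from the
   off-diagonal entries, which identifies P(R) with P^1(F3) x P^1(F3) x F3 (4 * 4 * 3 = 48 points);
   two points are distant iff both of their P^1(F3)-coordinates differ, and all six claims
   become counting in this model. *)

type_synonym 'a mat2 = "'a \<times> 'a \<times> 'a \<times> 'a"

fun mat2_mult :: "'a::ring_1 mat2 \<Rightarrow> 'a mat2 \<Rightarrow> 'a mat2" where
  "mat2_mult (a, b, c, d) (e, f, g, h) = (a*e + b*g, a*f + b*h, c*e + d*g, c*f + d*h)"

definition mat2_one :: "'a::ring_1 mat2" where
  "mat2_one = (1, 0, 0, 1)"

definition mat2_invertible :: "'a::ring_1 mat2 \<Rightarrow> bool" where
  "mat2_invertible M \<longleftrightarrow> (\<exists>N. mat2_mult M N = mat2_one \<and> mat2_mult N M = mat2_one)"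

lemma mat2_mult_assoc: "mat2_mult (mat2_mult L M) N = mat2_mult L (mat2_mult M N)"
  by (cases L; cases M; cases N) (simp add: algebra_simps)

lemma mat2_mult_one [simp]: "mat2_mult M mat2_one = M" "mat2_mult mat2_one M = M"
  by (cases M; simp add: mat2_one_def)+

lemma invertible2_iff_mat2_invertible: "invertible2 a b c d \<longleftrightarrow> mat2_invertible (a, b, c, d)"
  unfolding invertible2_def mat2_invertible_def mat2_one_def by auto

lemma invertible2_swap_rows: "invertible2 a b c d \<Longrightarrow> invertible2 c d a b"
  unfolding invertible2_def by (metis add.commute)

lemma mat2_invertible_mult:
  assumes "mat2_invertible M" and "mat2_invertible N"
  shows "mat2_invertible (mat2_mult M N)"
proof -
  obtain M' N' where "mat2_mult M M' = mat2_one" "mat2_mult M' M = mat2_one"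
    "mat2_mult N N' = mat2_one" "mat2_mult N' N = mat2_one"
    using assms unfolding mat2_invertible_def by blast
  then have "mat2_mult (mat2_mult M N) (mat2_mult N' M') = mat2_one"
    and "mat2_mult (mat2_mult N' M') (mat2_mult M N) = mat2_one"
    by (simp_all add: mat2_mult_assoc flip: mat2_mult_assoc[of N N'] mat2_mult_assoc[of M' M])
  then show ?thesis unfolding mat2_invertible_def by blast
qed

lemma mat2_invertible_diag:
  assumes "ring_unit u" and "ring_unit v"
  shows "mat2_invertible (u, 0, 0, v)"
proof -
  obtain u' v' where "u * u' = 1" "u' * u = 1" "v * v' = 1" "v' * v = 1"
    using assms unfolding ring_unit_def by blast
  then have "mat2_mult (u, 0, 0, v) (u', 0, 0, v') = mat2_one"
    and "mat2_mult (u', 0, 0, v') (u, 0, 0, v) = mat2_one"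
    by (simp_all add: mat2_one_def)
  then show ?thesis unfolding mat2_invertible_def by blast
qed

lemma mat2_invertible_upper:
  assumes "ring_unit u"
  shows "mat2_invertible (u, b, 0, 1)"
proof -
  obtain u' where u': "u * u' = 1" "u' * u = 1" using assms unfolding ring_unit_def by blast
  have "u * - (u' * b) + b = 0" using u' by (simp flip: mult.assoc)
  then have "mat2_mult (u, b, 0, 1) (u', - (u' * b), 0, 1) = mat2_one"
    and "mat2_mult (u', - (u' * b), 0, 1) (u, b, 0, 1) = mat2_one"
    using u' by (simp_all add: mat2_one_def)
  then show ?thesis unfolding mat2_invertible_def by blast
qed

lemma mat2_invertible_lower: "mat2_invertible (1, 0, t, 1)"
proof -
  have "mat2_mult (1, 0, t, 1) (1, 0, - t, 1) = mat2_one"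
    and "mat2_mult (1, 0, - t, 1) (1, 0, t, 1) = mat2_one"
    by (simp_all add: mat2_one_def)
  then show ?thesis unfolding mat2_invertible_def by blast
qed

lemma invertible2_mult_units:
  assumes "invertible2 a b c d" and "ring_unit u" and "ring_unit v"
  shows "invertible2 (u * a) (u * b) (v * c) (v * d)"
proof -
  have "(u * a, u * b, v * c, v * d) = mat2_mult (u, 0, 0, v) (a, b, c, d)" by simp
  then show ?thesis
    using assms mat2_invertible_mult mat2_invertible_diag
    unfolding invertible2_iff_mat2_invertible by metis
qed

fun mat2_map :: "('a \<Rightarrow> 'b) \<Rightarrow> 'a mat2 \<Rightarrow> 'b mat2" where
  "mat2_map f (a, b, c, d) = (f a, f b, f c, f d)"

fun mat2_add :: "'a::ring_1 mat2 \<Rightarrow> 'a mat2 \<Rightarrow> 'a mat2" where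
  "mat2_add (a, b, c, d) (e, f, g, h) = (a + e, b + f, c + g, d + h)"

definition mat2_zero :: "'a::ring_1 mat2" where
  "mat2_zero = (0, 0, 0, 0)"

lemma mat2_mult_uminus:
  "mat2_mult M (mat2_map uminus N) = mat2_map uminus (mat2_mult M N)"
  "mat2_mult (mat2_map uminus M) N = mat2_map uminus (mat2_mult M N)"
  by (cases M; cases N; simp add: algebra_simps)+

lemma mat2_add_uminus:
  "mat2_add (mat2_map uminus M) M = mat2_zero" "mat2_add M (mat2_map uminus M) = mat2_zero"
  by (cases M; simp add: mat2_zero_def)+

fun mat2_det :: "'a::comm_ring_1 mat2 \<Rightarrow> 'a" where
  "mat2_det (a, b, c, d) = a * d - b * c"

lemma mat2_det_mult: "mat2_det (mat2_mult M N) = mat2_det M * mat2_det N"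
  by (cases M; cases N) (simp add: algebra_simps)

lemma mat2_invertible_iff_det_unit:
  "mat2_invertible (M::'a::comm_ring_1 mat2) \<longleftrightarrow> (\<exists>k. k * mat2_det M = 1)"
proof
  assume "mat2_invertible M"
  then obtain N where "mat2_mult N M = mat2_one" unfolding mat2_invertible_def by blast
  then have "mat2_det N * mat2_det M = 1"
    by (metis mat2_det_mult mat2_det.simps mat2_one_def mult_1 diff_zero mult_zero_left)
  then show "\<exists>k. k * mat2_det M = 1" by blast
next
  assume "\<exists>k. k * mat2_det M = 1"
  then obtain k a b c d where k: "k * (a * d - b * c) = 1" and M: "M = (a, b, c, d)"
    by (cases M) auto
  have "mat2_mult M (k * d, - (k * b), - (k * c), k * a) = mat2_one"
    and "mat2_mult (k * d, - (k * b), - (k * c), k * a) M = mat2_one"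
    using k unfolding M by (simp_all add: mat2_one_def algebra_simps)
  then show "mat2_invertible M" unfolding mat2_invertible_def by blast
qed

lemma admissible_imp_unimodular:
  "admissible (a::'a::ring_1) b \<Longrightarrow> \<exists>x y. a * x + b * y = 1"
  unfolding admissible_def invertible2_def by blast

lemma eq_one_if_fixes_unimodular:
  fixes a b k :: "'a::ring_1"
  assumes "a * x + b * y = 1" and "k * a = a" and "k * b = b"
  shows "k = 1"
proof -
  have "k = k * (a * x + b * y)" using assms(1) by simp
  also have "\<dots> = (k * a) * x + (k * b) * y" by (simp add: algebra_simps)
  finally show ?thesis using assms by simp
qed

lemma admissible_if_unit_combination:
  fixes a b t :: "'a::ring_1"
  assumes "ring_unit (a + b * t)"
  shows "admissible a b"
proof -
  have "(a, b, - t, 1) = mat2_mult (a + b * t, b, 0, 1) (1, 0, - t, 1)" by simp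
  then have "invertible2 a b (- t) 1"
    using assms mat2_invertible_mult mat2_invertible_upper mat2_invertible_lower
    unfolding invertible2_iff_mat2_invertible by metis
  then show ?thesis unfolding admissible_def by blast
qed

lemma mem_lsub_iff: "(x, y) \<in> lsub a b \<longleftrightarrow> (\<exists>r. x = r * a \<and> y = r * b)"
  unfolding lsub_def by blast

lemma lsub_mult_unit:
  fixes a b u :: "'a::ring_1"
  assumes "ring_unit u"
  shows "lsub (u * a) (u * b) = lsub a b"
proof -
  obtain v where v: "v * u = 1" using assms unfolding ring_unit_def by blast
  have "(\<exists>r. x = r * (u * a) \<and> y = r * (u * b)) \<longleftrightarrow> (\<exists>r. x = r * a \<and> y = r * b)" for x y
  proof
    assume "\<exists>r. x = r * (u * a) \<and> y = r * (u * b)"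
    then show "\<exists>r. x = r * a \<and> y = r * b" by (metis mult.assoc)
  next
    assume "\<exists>r. x = r * a \<and> y = r * b"
    then obtain r where "x = r * a" "y = r * b" by blast
    then have "x = (r * v) * (u * a) \<and> y = (r * v) * (u * b)"
      using v by (simp add: mult.assoc flip: mult.assoc[of v u])
    then show "\<exists>r. x = r * (u * a) \<and> y = r * (u * b)" by blast
  qed
  then show ?thesis by (auto simp: mem_lsub_iff)
qed

lemma lsub_eq_iff_unit_multiple:
  fixes a b c d :: "'a::ring_1"
  assumes "admissible a b" and "admissible c d"
  shows "lsub a b = lsub c d \<longleftrightarrow> (\<exists>u. ring_unit u \<and> c = u * a \<and> d = u * b)"
proof
  assume eq: "lsub a b = lsub c d"
  have "(c, d) \<in> lsub a b" unfolding eq by (auto simp: mem_lsub_iff intro: exI[of _ 1])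
  moreover have "(a, b) \<in> lsub c d" unfolding eq[symmetric] by (auto simp: mem_lsub_iff intro: exI[of _ 1])
  ultimately obtain r s where r: "c = r * a" "d = r * b" and s: "a = s * c" "b = s * d"
    by (auto simp: mem_lsub_iff)
  have "s * r = 1"
    using admissible_imp_unimodular[OF assms(1)]
    by (metis eq_one_if_fixes_unimodular mult.assoc r s)
  moreover have "r * s = 1"
    using admissible_imp_unimodular[OF assms(2)]
    by (metis eq_one_if_fixes_unimodular mult.assoc r s)
  ultimately show "\<exists>u. ring_unit u \<and> c = u * a \<and> d = u * b"
    using r unfolding ring_unit_def by blast
next
  assume "\<exists>u. ring_unit u \<and> c = u * a \<and> d = u * b"
  then show "lsub a b = lsub c d" using lsub_mult_unit by metis
qed

lemma distant_lsub_iff: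
  fixes a b c d :: "'a::ring_1"
  assumes "admissible a b" and "admissible c d"
  shows "distant (lsub a b) (lsub c d) \<longleftrightarrow> invertible2 a b c d"
proof
  assume "distant (lsub a b) (lsub c d)"
  then obtain a' b' c' d' where eq: "lsub a b = lsub a' b'" "lsub c d = lsub c' d'"
    and inv: "invertible2 a' b' c' d'" unfolding distant_def by blast
  have "admissible a' b'" "admissible c' d'"
    using inv invertible2_swap_rows unfolding admissible_def by blast+
  then obtain u v where "ring_unit u" "a = u * a'" "b = u * b'"
    and "ring_unit v" "c = v * c'" "d = v * d'"
    using eq assms lsub_eq_iff_unit_multiple by metis
  then show "invertible2 a b c d" using invertible2_mult_units[OF inv] by simp
next
  assume "invertible2 a b c d"
  then show "distant (lsub a b) (lsub c d)" unfolding distant_def by blast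
qed

section \<open>Upper triangular matrices over F3\<close>

lemma F3_cases: "(x::3) = 0 \<or> x = 1 \<or> x = 2"
proof (induct x)
  case (of_int z)
  then have "z = 0 \<or> z = 1 \<or> z = 2" by auto
  then show ?case by auto
qed

lemma F3_square_eq_one: "(x::3) \<noteq> 0 \<Longrightarrow> x * x = 1"
  using F3_cases[of x] by auto

lemma F3_square_cancel: "(x::3) \<noteq> 0 \<Longrightarrow> x * (x * z) = z"
  by (simp flip: mult.assoc add: F3_square_eq_one)

fun ut11 :: "ut \<Rightarrow> 3" where "ut11 (UT x y z) = x"
fun ut12 :: "ut \<Rightarrow> 3" where "ut12 (UT x y z) = y"
fun ut22 :: "ut \<Rightarrow> 3" where "ut22 (UT x y z) = z"

lemma ut_eq_iff: "x = y \<longleftrightarrow> ut11 x = ut11 y \<and> ut12 x = ut12 y \<and> ut22 x = ut22 y"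
  by (cases x; cases y) auto

lemma ut_entries [simp]:
  "ut11 (x * y) = ut11 x * ut11 y"
  "ut12 (x * y) = ut11 x * ut12 y + ut12 x * ut22 y"
  "ut22 (x * y) = ut22 x * ut22 y"
  "ut11 (x + y) = ut11 x + ut11 y" "ut12 (x + y) = ut12 x + ut12 y" "ut22 (x + y) = ut22 x + ut22 y"
  "ut11 0 = 0" "ut12 0 = 0" "ut22 0 = 0" "ut11 1 = 1" "ut12 1 = 0" "ut22 1 = 1"
  by (cases x; cases y; simp add: zero_ut_def one_ut_def)+

lemma ut_unit_iff: "ring_unit u \<longleftrightarrow> ut11 u \<noteq> 0 \<and> ut22 u \<noteq> 0"
proof
  assume "ring_unit u"
  then obtain v where "u * v = 1" unfolding ring_unit_def by blast
  then have "ut11 (u * v) = 1" "ut22 (u * v) = 1" by simp_all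
  then have "ut11 u * ut11 v = 1" "ut22 u * ut22 v = 1" by simp_all
  then show "ut11 u \<noteq> 0 \<and> ut22 u \<noteq> 0" by auto
next
  assume "ut11 u \<noteq> 0 \<and> ut22 u \<noteq> 0"
  then have sq: "ut11 u * ut11 u = 1" "ut22 u * ut22 u = 1"
    and cancel: "\<And>z. ut11 u * (ut11 u * z) = z" "\<And>z. ut22 u * (ut22 u * z) = z"
    using F3_square_eq_one F3_square_cancel by auto
  define v where "v = UT (ut11 u) (- (ut11 u * ut12 u * ut22 u)) (ut22 u)"
  have "u * v = 1" and "v * u = 1"
    unfolding ut_eq_iff by (simp_all add: v_def algebra_simps sq cancel)
  then show "ring_unit u" unfolding ring_unit_def by blast
qed

lemma ut_admissible_iff:
  "admissible a b \<longleftrightarrow> (ut11 a \<noteq> 0 \<or> ut11 b \<noteq> 0) \<and> (ut22 a \<noteq> 0 \<or> ut22 b \<noteq> 0)"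
proof
  assume "admissible a b"
  then obtain x y where "a * x + b * y = 1" using admissible_imp_unimodular by blast
  then have "ut11 (a * x + b * y) = 1" "ut22 (a * x + b * y) = 1" by simp_all
  then have "ut11 a * ut11 x + ut11 b * ut11 y = 1" "ut22 a * ut22 x + ut22 b * ut22 y = 1"
    by simp_all
  then show "(ut11 a \<noteq> 0 \<or> ut11 b \<noteq> 0) \<and> (ut22 a \<noteq> 0 \<or> ut22 b \<noteq> 0)" by auto
next
  assume nonzero: "(ut11 a \<noteq> 0 \<or> ut11 b \<noteq> 0) \<and> (ut22 a \<noteq> 0 \<or> ut22 b \<noteq> 0)"
  define t where "t = UT (if ut11 a = 0 then 1 else 0) 0 (if ut22 a = 0 then 1 else 0)"
  have "ring_unit (a + b * t)" using nonzero by (simp add: ut_unit_iff t_def)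
  then show "admissible a b" by (rule admissible_if_unit_combination)
qed

lemma F3_mat2_invertible_iff: "mat2_invertible (M::3 mat2) \<longleftrightarrow> mat2_det M \<noteq> 0"
  unfolding mat2_invertible_iff_det_unit using F3_square_eq_one by fastforce

fun ut_mat2 :: "3 mat2 \<Rightarrow> 3 mat2 \<Rightarrow> 3 mat2 \<Rightarrow> ut mat2" where
  "ut_mat2 (a, b, c, d) (a', b', c', d') (a'', b'', c'', d'') =
     (UT a a' a'', UT b b' b'', UT c c' c'', UT d d' d'')"

lemma mat2_map_ut_mat2 [simp]:
  "mat2_map ut11 (ut_mat2 A B C) = A"
  "mat2_map ut12 (ut_mat2 A B C) = B"
  "mat2_map ut22 (ut_mat2 A B C) = C"
  by (cases A; cases B; cases C; simp)+

lemma ut_mat2_eq_iff: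
  "M = N \<longleftrightarrow> mat2_map ut11 M = mat2_map ut11 N \<and> mat2_map ut12 M = mat2_map ut12 N
     \<and> mat2_map ut22 M = mat2_map ut22 N"
  by (cases M; cases N) (auto simp: ut_eq_iff)

lemma mat2_map_ut_mult [simp]:
  "mat2_map ut11 (mat2_mult M N) = mat2_mult (mat2_map ut11 M) (mat2_map ut11 N)"
  "mat2_map ut22 (mat2_mult M N) = mat2_mult (mat2_map ut22 M) (mat2_map ut22 N)"
  "mat2_map ut12 (mat2_mult M N) =
     mat2_add (mat2_mult (mat2_map ut11 M) (mat2_map ut12 N))
              (mat2_mult (mat2_map ut12 M) (mat2_map ut22 N))"
  by (cases M; cases N; simp add: algebra_simps)+

lemma mat2_map_ut_one [simp]:
  "mat2_map ut11 mat2_one = mat2_one" "mat2_map ut12 mat2_one = mat2_zero"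
  "mat2_map ut22 mat2_one = mat2_one"
  by (simp_all add: mat2_one_def mat2_zero_def)

text \<open>The strictly upper triangular matrices form an ideal of square zero, so a matrix over
  \<open>ut\<close> is invertible as soon as its two diagonal reductions \<open>M\<^sub>1\<^sub>1\<close>, \<open>M\<^sub>2\<^sub>2\<close> are: with
  their inverses \<open>N\<^sub>1\<close>, \<open>N\<^sub>2\<close>, the inverse is block triangular with off-diagonal block
  \<open>- N\<^sub>1 M\<^sub>1\<^sub>2 N\<^sub>2\<close>.\<close>

lemma ut_mat2_invertible_iff:
  "mat2_invertible (M::ut mat2) \<longleftrightarrow>
     mat2_invertible (mat2_map ut11 M) \<and> mat2_invertible (mat2_map ut22 M)"
proof
  assume "mat2_invertible M"
  then obtain N where "mat2_mult M N = mat2_one" "mat2_mult N M = mat2_one"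
    unfolding mat2_invertible_def by blast
  then show "mat2_invertible (mat2_map ut11 M) \<and> mat2_invertible (mat2_map ut22 M)"
    unfolding mat2_invertible_def by (metis mat2_map_ut_mult(1,2) mat2_map_ut_one(1,3))
next
  assume "mat2_invertible (mat2_map ut11 M) \<and> mat2_invertible (mat2_map ut22 M)"
  then obtain N1 N2 where
    N1: "mat2_mult (mat2_map ut11 M) N1 = mat2_one" "mat2_mult N1 (mat2_map ut11 M) = mat2_one" and
    N2: "mat2_mult (mat2_map ut22 M) N2 = mat2_one" "mat2_mult N2 (mat2_map ut22 M) = mat2_one"
    unfolding mat2_invertible_def by blast
  define N12 where "N12 = mat2_map uminus (mat2_mult (mat2_mult N1 (mat2_map ut12 M)) N2)"
  have "mat2_mult (mat2_map ut11 M) N12 = mat2_map uminus (mat2_mult (mat2_map ut12 M) N2)"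
    unfolding N12_def mat2_mult_uminus
    by (simp add: mat2_mult_assoc flip: mat2_mult_assoc[of "mat2_map ut11 M" N1] add: N1)
  moreover have "mat2_mult N12 (mat2_map ut22 M) = mat2_map uminus (mat2_mult N1 (mat2_map ut12 M))"
    unfolding N12_def mat2_mult_uminus by (simp add: mat2_mult_assoc N2)
  ultimately have "mat2_mult M (ut_mat2 N1 N12 N2) = mat2_one"
    and "mat2_mult (ut_mat2 N1 N12 N2) M = mat2_one"
    unfolding ut_mat2_eq_iff using N1 N2 by (simp_all add: mat2_add_uminus)
  then show "mat2_invertible M" unfolding mat2_invertible_def by blast
qed

lemma ut_invertible2_iff:
  "invertible2 a b c d \<longleftrightarrow>
     ut11 a * ut11 d - ut11 b * ut11 c \<noteq> 0 \<and> ut22 a * ut22 d - ut22 b * ut22 c \<noteq> 0"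
  unfolding invertible2_iff_mat2_invertible ut_mat2_invertible_iff F3_mat2_invertible_iff
  by simp

section \<open>Coordinates on the projective line\<close>

text \<open>Here \<open>y * x\<close> is \<open>y / x\<close>: nonzero elements of F3 are their own inverses.\<close>

definition proj_normalize :: "3 \<Rightarrow> 3 \<Rightarrow> 3 \<times> 3" where
  "proj_normalize x y = (if x \<noteq> 0 then (1, y * x) else (0, 1))"

definition leading_entry :: "3 \<Rightarrow> 3 \<Rightarrow> 3" where
  "leading_entry x y = (if x \<noteq> 0 then x else y)"

definition P1_F3 :: "(3 \<times> 3) set" where
  "P1_F3 = {(1, 0), (1, 1), (1, 2), (0, 1)}"

type_synonym coords = "(3 \<times> 3) \<times> (3 \<times> 3) \<times> 3"

definition ut_coords :: "coords set" where
  "ut_coords = P1_F3 \<times> P1_F3 \<times> UNIV"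

text \<open>Left multiplication by a unit \<open>u\<close> multiplies the minor \<open>a\<^sub>1\<^sub>2 b\<^sub>2\<^sub>2 - b\<^sub>1\<^sub>2 a\<^sub>2\<^sub>2\<close>
  by \<open>u\<^sub>1\<^sub>1 u\<^sub>2\<^sub>2\<close> and the two leading entries by \<open>u\<^sub>1\<^sub>1\<close> and \<open>u\<^sub>2\<^sub>2\<close>; as squares of
  nonzero elements of F3 are 1, the third coordinate is invariant.\<close>

definition coords_of :: "ut \<Rightarrow> ut \<Rightarrow> coords" where
  "coords_of a b =
     (proj_normalize (ut11 a) (ut11 b), proj_normalize (ut22 a) (ut22 b),
      (ut12 a * ut22 b - ut12 b * ut22 a) * leading_entry (ut11 a) (ut11 b)
        * leading_entry (ut22 a) (ut22 b))"

text \<open>The representative clears the (1,2) entry of the component whose (2,2) entry is nonzero.\<close>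

fun rep_of_coords :: "coords \<Rightarrow> ut \<times> ut" where
  "rep_of_coords ((x, y), (x', y'), z) =
     (if x' \<noteq> 0 then (UT x 0 x', UT y (- z) y') else (UT x z x', UT y 0 y'))"

definition point_of_coords :: "coords \<Rightarrow> (ut \<times> ut) set" where
  "point_of_coords s = case_prod lsub (rep_of_coords s)"

lemma coords_of_in_ut_coords: "coords_of a b \<in> ut_coords"
  using F3_cases[of "ut11 a"] F3_cases[of "ut11 b"] F3_cases[of "ut22 a"] F3_cases[of "ut22 b"]
  by (auto simp: coords_of_def ut_coords_def P1_F3_def proj_normalize_def)

lemma rep_of_coords_correct:
  assumes "s \<in> ut_coords"
  shows "admissible (fst (rep_of_coords s)) (snd (rep_of_coords s))
    \<and> coords_of (fst (rep_of_coords s)) (snd (rep_of_coords s)) = s"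
  using assms unfolding ut_coords_def P1_F3_def
  by (auto simp: ut_admissible_iff coords_of_def proj_normalize_def leading_entry_def)

lemma coords_of_mult_unit:
  assumes "ring_unit u"
  shows "coords_of (u * a) (u * b) = coords_of a b"
proof -
  have u: "ut11 u \<noteq> 0" "ut22 u \<noteq> 0" using assms ut_unit_iff by auto
  have normalize: "proj_normalize (v * x) (v * y) = proj_normalize x y" if "v \<noteq> 0" for v x y
    using that F3_cases[of x] F3_cases[of y] F3_cases[of v] by (auto simp: proj_normalize_def)
  have leading: "leading_entry (v * x) (v * y) = v * leading_entry x y" if "v \<noteq> 0" for v x y
    using that F3_cases[of x] F3_cases[of v] by (auto simp: leading_entry_def)
  have minor: "ut12 (u * a) * ut22 (u * b) - ut12 (u * b) * ut22 (u * a)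
      = ut11 u * ut22 u * (ut12 a * ut22 b - ut12 b * ut22 a)"
    by (simp add: algebra_simps)
  have "ut11 u * ut22 u * m * (ut11 u * l) * (ut22 u * l') = m * l * l'" for m l l'
  proof -
    have "ut11 u * ut22 u * m * (ut11 u * l) * (ut22 u * l')
        = (ut11 u * ut11 u) * (ut22 u * ut22 u) * (m * l * l')"
      by (simp add: algebra_simps)
    then show ?thesis using F3_square_eq_one u by simp
  qed
  then show ?thesis
    unfolding coords_of_def minor using u by (simp add: normalize leading)
qed

lemma unit_multiple_eq_rep_of_coords:
  assumes "admissible a b"
  shows "\<exists>u. ring_unit u \<and> (u * a, u * b) = rep_of_coords (coords_of a b)"
proof -
  obtain a1 a2 a3 b1 b2 b3 where a: "a = UT a1 a2 a3" and b: "b = UT b1 b2 b3"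
    by (cases a; cases b)
  have nonzero: "a1 \<noteq> 0 \<or> b1 \<noteq> 0" "a3 \<noteq> 0 \<or> b3 \<noteq> 0"
    using assms by (simp_all add: ut_admissible_iff a b)
  define u1 where "u1 = leading_entry a1 b1"
  define u3 where "u3 = leading_entry a3 b3"
  define u2 where "u2 = - u1 * (if a3 \<noteq> 0 then a2 * a3 else b2 * b3)"
  have "ring_unit (UT u1 u2 u3)"
    using nonzero by (simp add: ut_unit_iff u1_def u3_def leading_entry_def)
  moreover have "(UT u1 u2 u3 * a, UT u1 u2 u3 * b) = rep_of_coords (coords_of a b)"
    using nonzero
    by (cases "a1 = 0"; cases "a3 = 0")
      (simp_all add: a b coords_of_def proj_normalize_def leading_entry_def u1_def u2_def u3_def
         algebra_simps F3_square_eq_one F3_square_cancel)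
  ultimately show ?thesis by blast
qed

lemma lsub_eq_iff_coords_of:
  assumes "admissible a b" and "admissible c d"
  shows "lsub a b = lsub c d \<longleftrightarrow> coords_of a b = coords_of c d"
proof
  assume "lsub a b = lsub c d"
  then show "coords_of a b = coords_of c d"
    using assms lsub_eq_iff_unit_multiple coords_of_mult_unit by metis
next
  assume eq: "coords_of a b = coords_of c d"
  obtain u v where "ring_unit u" "(u * a, u * b) = rep_of_coords (coords_of a b)"
    and "ring_unit v" "(v * c, v * d) = rep_of_coords (coords_of c d)"
    using unit_multiple_eq_rep_of_coords assms by metis
  then show "lsub a b = lsub c d" using eq lsub_mult_unit by (metis prod.inject)
qed

lemma ut_coords_representative:
  assumes "s \<in> ut_coords"
  obtains a b where "admissible a b" "coords_of a b = s" "point_of_coords s = lsub a b"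
proof -
  obtain a b where rep: "rep_of_coords s = (a, b)" by fastforce
  show thesis
    using rep_of_coords_correct[OF assms] by (intro that[of a b]) (simp_all add: point_of_coords_def rep)
qed

lemma projline_ut_eq_image: "PR = point_of_coords ` ut_coords"
proof (intro equalityI subsetI)
  fix p :: "(ut \<times> ut) set"
  assume "p \<in> projline"
  then obtain a b where p: "p = lsub a b" and ab: "admissible a b" unfolding projline_def by blast
  obtain c d where cd: "admissible c d" "coords_of c d = coords_of a b"
    and rep: "point_of_coords (coords_of a b) = lsub c d"
    using ut_coords_representative[OF coords_of_in_ut_coords] by metis
  have "point_of_coords (coords_of a b) = p"
    unfolding rep p using lsub_eq_iff_coords_of[OF cd(1) ab] cd(2) by blast
  then show "p \<in> point_of_coords ` ut_coords" using coords_of_in_ut_coords by blast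
next
  fix p
  assume "p \<in> point_of_coords ` ut_coords"
  then obtain s where "s \<in> ut_coords" "p = point_of_coords s" by blast
  then obtain a b where "admissible a b" "p = lsub a b" using ut_coords_representative by metis
  then show "p \<in> projline" unfolding projline_def by blast
qed

lemma inj_on_point_of_coords: "inj_on point_of_coords ut_coords"
proof (rule inj_onI)
  fix s t
  assume "s \<in> ut_coords" "t \<in> ut_coords" and eq: "point_of_coords s = point_of_coords t"
  then obtain a b c d where "admissible a b" "coords_of a b = s" "point_of_coords s = lsub a b"
    and "admissible c d" "coords_of c d = t" "point_of_coords t = lsub c d"
    using ut_coords_representative by metis
  then show "s = t" using eq lsub_eq_iff_coords_of by metis
qed

definition coords_distant :: "coords \<Rightarrow> coords \<Rightarrow> bool" where
  "coords_distant s t \<longleftrightarrow> fst s \<noteq> fst t \<and> fst (snd s) \<noteq> fst (snd t)"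

lemma proj_normalize_eq_iff:
  assumes "x \<noteq> 0 \<or> y \<noteq> 0" and "x' \<noteq> 0 \<or> y' \<noteq> 0"
  shows "proj_normalize x y = proj_normalize x' y' \<longleftrightarrow> x * y' - y * x' = 0"
  using assms F3_cases[of x] F3_cases[of y] F3_cases[of x'] F3_cases[of y']
  by (auto simp: proj_normalize_def)

lemma distant_point_of_coords_iff:
  assumes "s \<in> ut_coords" and "t \<in> ut_coords"
  shows "distant (point_of_coords s) (point_of_coords t) \<longleftrightarrow> coords_distant s t"
proof -
  obtain a b c d where ab: "admissible a b" "coords_of a b = s" "point_of_coords s = lsub a b"
    and cd: "admissible c d" "coords_of c d = t" "point_of_coords t = lsub c d"
    using assms ut_coords_representative by metis
  have "distant (point_of_coords s) (point_of_coords t) \<longleftrightarrow> invertible2 a b c d"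
    using ab cd distant_lsub_iff by simp
  also have "\<dots> \<longleftrightarrow> coords_distant s t"
    using ab(1) cd(1) unfolding ut_admissible_iff ut_invertible2_iff coords_distant_def
      ab(2)[symmetric] cd(2)[symmetric] coords_of_def
    by (simp add: proj_normalize_eq_iff)
  finally show ?thesis .
qed

definition coords_unit :: "coords \<Rightarrow> bool" where
  "coords_unit s \<longleftrightarrow>
     (fst s \<noteq> (0, 1) \<and> fst (snd s) \<noteq> (0, 1)) \<or> (fst s \<noteq> (1, 0) \<and> fst (snd s) \<noteq> (1, 0))"

lemma unit_entry_iff_coords_unit:
  assumes "admissible a b"
  shows "ring_unit a \<or> ring_unit b \<longleftrightarrow> coords_unit (coords_of a b)"
proof -
  have "proj_normalize x y \<noteq> (0, 1) \<longleftrightarrow> x \<noteq> 0" "proj_normalize x y \<noteq> (1, 0) \<longleftrightarrow> y \<noteq> 0"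
    if "x \<noteq> 0 \<or> y \<noteq> 0" for x y :: 3
    using that F3_cases[of x] F3_cases[of y] by (auto simp: proj_normalize_def)
  then show ?thesis
    using assms unfolding ut_admissible_iff ut_unit_iff coords_unit_def coords_of_def by auto
qed

lemma has_unit_rep_iff_coords_unit:
  assumes "s \<in> ut_coords"
  shows "(\<exists>a b. admissible a b \<and> lsub a b = point_of_coords s \<and> (ring_unit a \<or> ring_unit b))
    \<longleftrightarrow> coords_unit s"
proof -
  obtain c d where cd: "admissible c d" "coords_of c d = s" "point_of_coords s = lsub c d"
    using assms ut_coords_representative by metis
  then have "admissible a b \<and> lsub a b = point_of_coords s \<longleftrightarrow> admissible a b \<and> coords_of a b = s"
    for a b using lsub_eq_iff_coords_of by metis
  then show ?thesis using cd unit_entry_iff_coords_unit by metis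
qed

section \<open>Counting\<close>

definition ut_coords_list :: "coords list" where
  "ut_coords_list =
     [(p, q, z). p \<leftarrow> [(1, 0), (1, 1), (1, 2), (0, 1)], q \<leftarrow> [(1, 0), (1, 1), (1, 2), (0, 1)],
        z \<leftarrow> [0, 1, 2]]"

lemma UNIV_F3: "(UNIV::3 set) = {0, 1, 2}"
  using F3_cases by auto

lemma ut_coords_eq_set: "ut_coords = set ut_coords_list"
  unfolding ut_coords_def P1_F3_def ut_coords_list_def UNIV_F3 by auto

lemma card_filter_ut_coords: "card {s \<in> ut_coords. P s} = length (filter P ut_coords_list)"
proof -
  have "distinct ut_coords_list" by (simp add: ut_coords_list_def)
  then show ?thesis by (simp add: distinct_length_filter ut_coords_eq_set Collect_conj_eq Int_commute)
qed

lemma card_ut_coords: "card ut_coords = 48"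
  by (simp add: ut_coords_def P1_F3_def card_cartesian_product)

lemma card_coords_unit: "card {s \<in> ut_coords. coords_unit s} = 42"
  by (simp add: card_filter_ut_coords ut_coords_list_def coords_unit_def)

lemma card_coords_neighbours:
  assumes "s \<in> ut_coords"
  shows "card {t \<in> ut_coords. \<not> coords_distant s t \<and> t \<noteq> s} = 20"
proof -
  have "\<forall>s \<in> set ut_coords_list.
      length (filter (\<lambda>t. \<not> coords_distant s t \<and> t \<noteq> s) ut_coords_list) = 20"
    by (simp add: ut_coords_list_def coords_distant_def)
  then show ?thesis unfolding card_filter_ut_coords using assms by (simp add: ut_coords_eq_set)
qed

lemma card_coords_common_neighbours:
  assumes "s \<in> ut_coords" and "t \<in> ut_coords" and "coords_distant s t"
  shows "card {r \<in> ut_coords. \<not> coords_distant s r \<and> \<not> coords_distant t r} = 6"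
proof -
  have "{r \<in> ut_coords. \<not> coords_distant s r \<and> \<not> coords_distant t r} =
      {fst s} \<times> {fst (snd t)} \<times> UNIV \<union> {fst t} \<times> {fst (snd s)} \<times> UNIV"
    using assms unfolding ut_coords_def coords_distant_def by auto
  moreover have "card ({fst s} \<times> {fst (snd t)} \<times> (UNIV :: 3 set) \<union> {fst t} \<times> {fst (snd s)} \<times> UNIV) = 3 + 3"
    using assms(3) by (subst card_Un_disjoint) (auto simp: coords_distant_def card_cartesian_product)
  ultimately show ?thesis by simp
qed

text \<open>Pigeonhole: two of the three points would share a coordinate with the common
  neighbour, hence with each other.\<close>

lemma coords_no_common_neighbour:
  assumes "coords_distant s t" and "coords_distant s r" and "coords_distant t r"
  shows "coords_distant s e \<or> coords_distant t e \<or> coords_distant r e"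
  using assms unfolding coords_distant_def by metis

lemma coords_distant_set_of_card_4:
  "\<exists>T \<subseteq> ut_coords. card T = 4 \<and> pairwise coords_distant T"
proof (intro exI conjI)
  let ?T = "{((1, 0), (1, 0), 0), ((1, 1), (1, 1), 0), ((1, 2), (1, 2), 0), ((0, 1), (0, 1), 0)}
    :: coords set"
  show "?T \<subseteq> ut_coords" by (simp add: ut_coords_def P1_F3_def)
  show "card ?T = 4" by simp
  show "pairwise coords_distant ?T" unfolding pairwise_def coords_distant_def by auto
qed

lemma card_coords_distant_set_le:
  assumes "T \<subseteq> ut_coords" and "pairwise coords_distant T"
  shows "card T \<le> 4"
proof -
  have "inj_on fst T"
    using assms(2) unfolding pairwise_def coords_distant_def by (auto intro: inj_onI)
  then have "card T = card (fst ` T)" by (simp add: card_image)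
  also have "\<dots> \<le> card P1_F3" using assms(1) by (intro card_mono) (auto simp: ut_coords_def P1_F3_def)
  also have "\<dots> = 4" by (simp add: P1_F3_def)
  finally show ?thesis .
qed

lemma card_Collect_image:
  assumes "inj_on f A"
  shows "card {y \<in> f ` A. P y} = card {x \<in> A. P (f x)}"
proof -
  have "{y \<in> f ` A. P y} = f ` {x \<in> A. P (f x)}" by blast
  then show ?thesis using assms by (simp add: card_image inj_on_subset)
qed

lemma projline_ut_cases:
  assumes "p \<in> PR"
  obtains s where "s \<in> ut_coords" and "p = point_of_coords s"
  using assms that unfolding projline_ut_eq_image by blast

lemma card_projline_ut: "card PR = 48"
  using card_ut_coords inj_on_point_of_coords
  by (simp add: projline_ut_eq_image card_image)

lemma card_projline_ut_unit_rep:
  "card {p \<in> PR. \<exists>a b. admissible a b \<and> lsub a b = p \<and> (ring_unit a \<or> ring_unit b)} = 42"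
proof -
  have "card {s \<in> ut_coords. \<exists>a b. admissible a b \<and> lsub a b = point_of_coords s
      \<and> (ring_unit a \<or> ring_unit b)} = 42"
    using card_coords_unit by (simp add: has_unit_rep_iff_coords_unit cong: conj_cong)
  then show ?thesis
    unfolding projline_ut_eq_image card_Collect_image[OF inj_on_point_of_coords] .
qed

lemma card_projline_ut_neighbours:
  assumes "p \<in> PR"
  shows "card {q \<in> PR. neighbour p q \<and> q \<noteq> p} = 20"
proof -
  obtain s where s: "s \<in> ut_coords" "p = point_of_coords s"
    using assms projline_ut_cases by metis
  have "point_of_coords t = p \<longleftrightarrow> t = s" if "t \<in> ut_coords" for t
    using that s inj_on_point_of_coords by (auto dest: inj_onD)
  then have "{t \<in> ut_coords. neighbour p (point_of_coords t) \<and> point_of_coords t \<noteq> p}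
      = {t \<in> ut_coords. \<not> coords_distant s t \<and> t \<noteq> s}"
    using s by (auto simp: neighbour_def distant_point_of_coords_iff)
  then show ?thesis
    using card_coords_neighbours[OF s(1)]
    by (simp add: projline_ut_eq_image card_Collect_image[OF inj_on_point_of_coords])
qed

lemma card_projline_ut_common_neighbours:
  assumes "p \<in> PR" and "q \<in> PR" and "distant p q"
  shows "card {r \<in> PR. neighbour p r \<and> neighbour q r} = 6"
proof -
  obtain s t where s: "s \<in> ut_coords" "p = point_of_coords s"
    and t: "t \<in> ut_coords" "q = point_of_coords t"
    using assms(1,2) projline_ut_cases by metis
  have "{r \<in> ut_coords. neighbour p (point_of_coords r) \<and> neighbour q (point_of_coords r)}
      = {r \<in> ut_coords. \<not> coords_distant s r \<and> \<not> coords_distant t r}"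
    using s t by (auto simp: neighbour_def distant_point_of_coords_iff)
  moreover have "coords_distant s t" using assms(3) s t by (simp add: distant_point_of_coords_iff)
  ultimately show ?thesis
    using card_coords_common_neighbours[OF s(1) t(1)]
    by (simp add: projline_ut_eq_image card_Collect_image[OF inj_on_point_of_coords])
qed

lemma projline_ut_no_common_neighbour:
  assumes "p \<in> PR" "q \<in> PR" "r \<in> PR" "e \<in> PR"
    and "distant p q" "distant p r" "distant q r"
  shows "distant p e \<or> distant q e \<or> distant r e"
proof -
  obtain s t u v where coords: "s \<in> ut_coords" "t \<in> ut_coords" "u \<in> ut_coords" "v \<in> ut_coords"
    and points: "p = point_of_coords s" "q = point_of_coords t" "r = point_of_coords u"
      "e = point_of_coords v"
    using assms(1-4) projline_ut_cases by metis
  note distant_iff = distant_point_of_coords_iff[OF coords(1,2)] distant_point_of_coords_iff[OF coords(1,3)]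
    distant_point_of_coords_iff[OF coords(2,3)] distant_point_of_coords_iff[OF coords(1,4)]
    distant_point_of_coords_iff[OF coords(2,4)] distant_point_of_coords_iff[OF coords(3,4)]
  have "coords_distant s t" "coords_distant s u" "coords_distant t u"
    using assms(5-7) unfolding points distant_iff .
  then have "coords_distant s v \<or> coords_distant t v \<or> coords_distant u v"
    by (rule coords_no_common_neighbour)
  then show ?thesis unfolding points distant_iff .
qed

lemma projline_ut_distant_set_of_card_4: "\<exists>S \<subseteq> PR. card S = 4 \<and> pairwise distant S"
proof -
  obtain T where T: "T \<subseteq> ut_coords" "card T = 4" "pairwise coords_distant T"
    using coords_distant_set_of_card_4 by blast
  have "card (point_of_coords ` T) = 4"
    using T inj_on_point_of_coords by (simp add: card_image inj_on_subset)
  moreover have "pairwise distant (point_of_coords ` T)"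
  proof (rule pairwise_imageI)
    fix s t
    assume "s \<in> T" "t \<in> T" "s \<noteq> t"
    then show "distant (point_of_coords s) (point_of_coords t)"
      using T by (simp add: distant_point_of_coords_iff subsetD pairwiseD)
  qed
  moreover have "point_of_coords ` T \<subseteq> PR"
    using T(1) unfolding projline_ut_eq_image by blast
  ultimately show ?thesis by blast
qed

lemma card_projline_ut_distant_set_le:
  assumes "S \<subseteq> PR" and "pairwise distant S"
  shows "card S \<le> 4"
proof -
  obtain T where T: "T \<subseteq> ut_coords" "S = point_of_coords ` T"
    using assms(1) unfolding projline_ut_eq_image subset_image_iff by blast
  have inj: "inj_on point_of_coords T" using T(1) inj_on_point_of_coords inj_on_subset by blast
  have "pairwise coords_distant T"
  proof (rule pairwiseI)
    fix s t
    assume st: "s \<in> T" "t \<in> T" "s \<noteq> t"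
    then have "point_of_coords s \<noteq> point_of_coords t" using inj by (simp add: inj_on_eq_iff)
    then have "distant (point_of_coords s) (point_of_coords t)"
      using assms(2) st unfolding T(2) by (simp add: pairwiseD)
    then show "coords_distant s t" using st T(1) by (simp add: distant_point_of_coords_iff subsetD)
  qed
  then show ?thesis
    using card_coords_distant_set_le T inj by (simp add: card_image)
qed

theorem mainTheorem2:
  shows "card PR = 48
    \<and> card {p \<in> PR. \<exists>a b. admissible a b \<and> lsub a b = p \<and> (ring_unit a \<or> ring_unit b)} = 42
    \<and> (\<forall>p \<in> PR. card {q \<in> PR. neighbour p q \<and> q \<noteq> p} = 20)
    \<and> (\<forall>p \<in> PR. \<forall>q \<in> PR. distant p q \<longrightarrow> card {r \<in> PR. neighbour p r \<and> neighbour q r} = 6)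
    \<and> (\<forall>p \<in> PR. \<forall>q \<in> PR. \<forall>r \<in> PR. distant p q \<and> distant p r \<and> distant q r \<longrightarrow>
           \<not> (\<exists>s \<in> PR. neighbour p s \<and> neighbour q s \<and> neighbour r s))
    \<and> (\<exists>S \<subseteq> PR. card S = 4 \<and> pairwise distant S)
    \<and> (\<forall>S \<subseteq> PR. pairwise distant S \<longrightarrow> card S \<le> 4)"
  using card_projline_ut card_projline_ut_unit_rep card_projline_ut_neighbours
    card_projline_ut_common_neighbours projline_ut_no_common_neighbour
    projline_ut_distant_set_of_card_4 card_projline_ut_distant_set_le
  unfolding neighbour_def by blast

end
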